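(* Let $\mathbf{A}=(A,\mathcal{R})$ and $\mathbf{B}=(B,\mathcal{S})$ be $\mathbf{K}$-objects and $f:\mathbf{A}\to\mathbf{B}$ a $\mathbf{K}$-morphism. Then the family $\Phi f$ with components $(\Phi f)_X:(\Phi\mathbf{B})X\to(\Phi\mathbf{A})X$, $(\Phi f)_X(g/\!\approx_{\mathbf{B}})=gf/\!\approx_{\mathbf{A}}$ for $g:B\to X$, is a well-defined natural transformation $\Phi\mathbf{B}\to\Phi\mathbf{A}$.
   Context: $\mathbf{T}$ is the category whose objects are pairs $(A,\mathcal{R})$ with $A$ a set and $\mathcal{R}$ a family of subsets of $A$, and whose morphisms $f:(A,\mathcal{R})\to(B,\mathcal{S})$ are maps $f:A\to B$ with $f^{-1}[S]\in\mathcal{R}$ for all $S\in\mathcal{S}$. Fix a simple graph with vertex set $V=\{v_1,\dots,v_6\}$ and edge set $\mathcal{G}$ (two-element subsets of $V$) with no non-identity automorphism. For a $\mathbf{T}$-object $(A,\mathcal{R})$ let $\Psi(A,\mathcal{R})=(\overline{A},\overline{\mathcal{R}})$ with $\overline{A}=A\sqcup V$ and $\overline{\mathcal{R}}$ consisting of $\{v_i\}$, $\overline{A}\setminus\{v_i\}$ ($i=1,\dots,6$), $G$, $\overline{A}\setminus G$ ($G\in\mathcal{G}$), and $\{v_1,v_2,v_3\}\cup R$, $\{v_4,v_5,v_6\}\cup(A\setminus R)$ ($R\in\mathcal{R}$); for a map $f$ let $\Psi f=f\sqcup\mathrm{id}_V$. $\mathbf{K}$ is the full subcategory of $\mathbf{T}$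 on the objects of the form $\Psi(A,\mathcal{R})$. For a $\mathbf{K}$-object $\mathbf{A}=(A,\mathcal{R})$ and a set $X$, let $\approx_{\mathbf{A}}$ be the relation on maps $A\to X$ given by $g_1\approx_{\mathbf{A}}g_2$ iff $g_1=g_2$, or $g_1[A]=g_2[A]$ is a two-element set $\{x,x'\}$ and $g_1^{-1}[\{x\}]=g_2^{-1}[\{x'\}]\in\mathcal{R}$ (this is an equivalence relation). The set functor $\Phi\mathbf{A}$ is given by $(\Phi\mathbf{A})X=\{g\,;\,g:A\to X\}/\!\approx_{\mathbf{A}}$ and $((\Phi\mathbf{A})h)(g/\!\approx_{\mathbf{A}})=hg/\!\approx_{\mathbf{A}}$ for $h:X\to Y$. *)

theory Defs
  imports "HOL-Library.FuncSet"
begin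

definition Vset :: "(nat \<Rightarrow> 'v) \<Rightarrow> 'v set" where
  "Vset v = v ` {1..6}"

definition rigid_graph :: "(nat \<Rightarrow> 'v) \<Rightarrow> 'v set set \<Rightarrow> bool" where
  "rigid_graph v G \<longleftrightarrow>
     inj_on v {1..6} \<and>
     (\<forall>e\<in>G. e \<subseteq> Vset v \<and> card e = 2) \<and>
     (\<forall>\<sigma>. bij_betw \<sigma> (Vset v) (Vset v) \<and> (\<lambda>e. \<sigma> ` e) ` G = G
           \<longrightarrow> (\<forall>x\<in>Vset v. \<sigma> x = x))"

definition Tobj :: "'a set \<Rightarrow> 'a set set \<Rightarrow> bool" where
  "Tobj A R \<longleftrightarrow> R \<subseteq> Pow A"

definition Tmor :: "'a set \<Rightarrow> 'a set set \<Rightarrow> 'b set \<Rightarrow> 'b set set \<Rightarrow> ('a \<Rightarrow> 'b) \<Rightarrow> bool" where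
  "Tmor A R B S f \<longleftrightarrow> f \<in> A \<rightarrow> B \<and> (\<forall>S'\<in>S. {a\<in>A. f a \<in> S'} \<in> R)"

text \<open>The functor Psi on objects; the disjoint union A + V is realised with Inl/Inr.\<close>

definition Psi_car :: "(nat \<Rightarrow> 'v) \<Rightarrow> 'a set \<Rightarrow> ('a + 'v) set" where
  "Psi_car v A0 = Inl ` A0 \<union> Inr ` Vset v"

definition Psi_fam :: "(nat \<Rightarrow> 'v) \<Rightarrow> 'v set set \<Rightarrow> 'a set \<Rightarrow> 'a set set \<Rightarrow> ('a + 'v) set set" where
  "Psi_fam v G A0 R0 =
     {{Inr (v i)} | i. i \<in> {1..6}}
   \<union> {Psi_car v A0 - {Inr (v i)} | i. i \<in> {1..6}}
   \<union> {Inr ` e | e. e \<in> G}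
   \<union> {Psi_car v A0 - Inr ` e | e. e \<in> G}
   \<union> {Inr ` {v 1, v 2, v 3} \<union> Inl ` R | R. R \<in> R0}
   \<union> {Inr ` {v 4, v 5, v 6} \<union> Inl ` (A0 - R) | R. R \<in> R0}"

text \<open>K-objects: the objects of the form Psi(A0, R0) for a T-object (A0, R0).
  K is full, so K-morphisms are exactly T-morphisms between K-objects.\<close>

definition Kobj :: "(nat \<Rightarrow> 'v) \<Rightarrow> 'v set set \<Rightarrow> ('a + 'v) set \<Rightarrow> ('a + 'v) set set \<Rightarrow> bool" where
  "Kobj v G A R \<longleftrightarrow> (\<exists>A0 R0. Tobj A0 R0 \<and> A = Psi_car v A0 \<and> R = Psi_fam v G A0 R0)"

text \<open>Maps A \<rightarrow> X are represented by extensional functions (A ->E X).\<close>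

definition approx :: "'a set \<Rightarrow> 'a set set \<Rightarrow> ('a \<Rightarrow> 'x) \<Rightarrow> ('a \<Rightarrow> 'x) \<Rightarrow> bool" where
  "approx A R g1 g2 \<longleftrightarrow> g1 = g2 \<or>
     (\<exists>x x'. x \<noteq> x' \<and> g1 ` A = {x, x'} \<and> g2 ` A = {x, x'} \<and>
        {a\<in>A. g1 a = x} = {a\<in>A. g2 a = x'} \<and> {a\<in>A. g1 a = x} \<in> R)"

definition cls :: "'a set \<Rightarrow> 'a set set \<Rightarrow> 'x set \<Rightarrow> ('a \<Rightarrow> 'x) \<Rightarrow> ('a \<Rightarrow> 'x) set" where
  "cls A R X g = {g' \<in> A \<rightarrow>\<^sub>E X. approx A R g g'}"

definition PhiObj :: "'a set \<Rightarrow> 'a set set \<Rightarrow> 'x set \<Rightarrow> ('a \<Rightarrow> 'x) set set" where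
  "PhiObj A R X = cls A R X ` (A \<rightarrow>\<^sub>E X)"

text \<open>((Phi A) h)(g/approx) = hg/approx, for h : X \<rightarrow> Y.\<close>
definition PhiMap :: "'a set \<Rightarrow> 'a set set \<Rightarrow> 'y set \<Rightarrow> ('x \<Rightarrow> 'y) \<Rightarrow> ('a \<Rightarrow> 'x) set \<Rightarrow> ('a \<Rightarrow> 'y) set" where
  "PhiMap A R Y h c = (THE c'. \<exists>g\<in>c. c' = cls A R Y (compose A h g))"

definition PhiMor :: "'a set \<Rightarrow> 'a set set \<Rightarrow> 'x set \<Rightarrow> ('a \<Rightarrow> 'b) \<Rightarrow> ('b \<Rightarrow> 'x) set \<Rightarrow> ('a \<Rightarrow> 'x) set" where
  "PhiMor A R X f c = (THE c'. \<exists>g\<in>c. c' = cls A R X (compose A g f))"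

end

theory Submission
  imports Defs
begin

text \<open>Two distinct related maps \<open>g \<approx> g'\<close> take the same two values and differ by
  exchanging them. Hence \<open>\<approx>\<close> is an equivalence relation, and it is preserved by
  postcomposition with any map. Precomposition with a T-morphism \<open>f\<close> preserves it too,
  provided no member of \<open>R\<close> is empty or all of \<open>A\<close>: the preimage under \<open>g f\<close> of one of
  the two values lies in \<open>R\<close>, so \<open>g f\<close> still takes both values. Every member of a K-object
  contains one of the six vertices and misses another (this uses only that the vertices
  are distinct and that edges have two elements, not the rigidity of the graph). So
  \<open>(\<Phi> f)\<^sub>X\<close> is well defined, and naturality is associativity of composition.\<close>

lemma approxI:
  assumes "x \<noteq> x'" "g1 ` A = {x, x'}" "{a\<in>A. g1 a = x} \<in> R"
    and range_g2: "\<And>a. a \<in> A \<Longrightarrow> g2 a \<in> {x, x'}"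
    and swap: "\<And>a. a \<in> A \<Longrightarrow> g1 a = x \<longleftrightarrow> g2 a = x'"
  shows "approx A R g1 g2"
proof -
  have "x \<in> g1 ` A" "x' \<in> g1 ` A"
    using assms(2) by simp_all
  then obtain a a' where "a \<in> A" "g1 a = x" "a' \<in> A" "g1 a' = x'"
    by (metis imageE)
  then have "g2 a = x'" "g2 a' = x"
    using swap range_g2 \<open>x \<noteq> x'\<close> by auto
  then have "g2 ` A = {x, x'}"
    using range_g2 \<open>a \<in> A\<close> \<open>a' \<in> A\<close> by (auto intro: rev_image_eqI)
  moreover have "{a\<in>A. g1 a = x} = {a\<in>A. g2 a = x'}"
    using swap by blast
  ultimately show ?thesis
    unfolding approx_def using assms(1-3)
    by (intro disjI2 exI[of _ x] exI[of _ x'] conjI) simp_all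
qed

lemma approxE:
  assumes "approx A R g1 g2" "g1 \<noteq> g2"
  obtains x x' where "x \<noteq> x'" "g1 ` A = {x, x'}" "g2 ` A = {x, x'}"
    "{a\<in>A. g1 a = x} \<in> R" "\<And>a. a \<in> A \<Longrightarrow> g1 a = x \<longleftrightarrow> g2 a = x'"
  using assms unfolding approx_def by blast

lemma approx_refl: "approx A R g g"
  by (simp add: approx_def)

lemma approx_sym:
  assumes "approx A R g1 g2"
  shows "approx A R g2 g1"
proof (cases "g1 = g2")
  case True
  then show ?thesis by (simp add: approx_refl)
next
  case False
  with assms obtain x x' where "x \<noteq> x'" "g1 ` A = {x, x'}" "g2 ` A = {x, x'}"
    and "{a\<in>A. g1 a = x} \<in> R" "\<And>a. a \<in> A \<Longrightarrow> g1 a = x \<longleftrightarrow> g2 a = x'"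
    by (rule approxE) blast
  moreover from this(5) have "{a\<in>A. g2 a = x'} = {a\<in>A. g1 a = x}"
    by blast
  ultimately show ?thesis
    unfolding approx_def
    by (intro disjI2 exI[of _ x'] exI[of _ x] conjI) (simp_all add: insert_commute)
qed

lemma approx_image_eq:
  assumes "approx A R g1 g2"
  shows "g1 ` A = g2 ` A"
proof (cases "g1 = g2")
  case False
  then obtain x x' where "g1 ` A = {x, x'}" "g2 ` A = {x, x'}"
    by (rule approxE[OF assms]) blast
  then show ?thesis by simp
qed simp

lemma approx_neq_pointwise:
  assumes "approx A R g1 g2" "g1 \<noteq> g2" "a \<in> A"
  shows "g1 a \<noteq> g2 a"
proof -
  obtain x x' where "x \<noteq> x'" "g1 ` A = {x, x'}"
    and swap: "\<And>a. a \<in> A \<Longrightarrow> g1 a = x \<longleftrightarrow> g2 a = x'"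
    by (rule approxE[OF assms(1,2)]) blast
  then have "g1 a \<in> {x, x'}"
    using \<open>a \<in> A\<close> by (metis imageI)
  then show ?thesis
    using swap[OF \<open>a \<in> A\<close>] \<open>x \<noteq> x'\<close> by auto
qed

lemma approx_trans:
  assumes "g1 \<in> extensional A" "g3 \<in> extensional A"
    and approx12: "approx A R g1 g2" and approx23: "approx A R g2 g3"
  shows "approx A R g1 g3"
proof (cases "g1 = g2 \<or> g2 = g3")
  case True
  then show ?thesis using approx12 approx23 by auto
next
  case False
  then have "g1 \<noteq> g2" "g2 \<noteq> g3" by simp_all
  obtain x x' where range_g2: "g2 ` A = {x, x'}"
    by (rule approxE[OF approx23 \<open>g2 \<noteq> g3\<close>]) blast
  have "g1 ` A = {x, x'}" "g3 ` A = {x, x'}"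
    using range_g2 approx_image_eq[OF approx12] approx_image_eq[OF approx23] by simp_all
  have "g1 a = g3 a" if "a \<in> A" for a
  proof -
    \<comment> \<open>both lie in the two-element set \<open>g2 ` A\<close> and avoid \<open>g2 a\<close>\<close>
    have "g1 a \<in> {x, x'}" "g2 a \<in> {x, x'}" "g3 a \<in> {x, x'}"
      using that \<open>g1 ` A = {x, x'}\<close> range_g2 \<open>g3 ` A = {x, x'}\<close> by (metis imageI)+
    moreover have "g1 a \<noteq> g2 a" "g3 a \<noteq> g2 a"
      using approx_neq_pointwise[OF approx12 \<open>g1 \<noteq> g2\<close> that]
        approx_neq_pointwise[OF approx23 \<open>g2 \<noteq> g3\<close> that] by simp_all
    ultimately show ?thesis by auto
  qed
  with assms(1,2) have "g1 = g3" by (rule extensionalityI)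
  then show ?thesis by (simp add: approx_refl)
qed

lemma cls_eq:
  assumes "g \<in> A \<rightarrow>\<^sub>E X" "g' \<in> A \<rightarrow>\<^sub>E X" and approx: "approx A R g g'"
  shows "cls A R X g = cls A R X g'"
proof -
  have "approx A R g h \<longleftrightarrow> approx A R g' h" if "h \<in> A \<rightarrow>\<^sub>E X" for h
  proof -
    have "g \<in> extensional A" "g' \<in> extensional A" "h \<in> extensional A"
      using assms(1,2) that by (simp_all add: PiE_iff)
    then show ?thesis
      using approx_trans approx approx_sym[OF approx] by metis
  qed
  then show ?thesis
    unfolding cls_def by blast
qed

lemma the_cls_lift:
  assumes "g \<in> A \<rightarrow>\<^sub>E X"
    and "\<And>g'. g' \<in> A \<rightarrow>\<^sub>E X \<Longrightarrow> approx A R g g' \<Longrightarrow> F g' = F g"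
  shows "(THE c. \<exists>g'\<in>cls A R X g. c = F g') = F g"
proof (rule the_equality)
  show "\<exists>g'\<in>cls A R X g. F g = F g'"
    using assms(1) by (auto simp: cls_def approx_refl)
next
  show "c = F g" if "\<exists>g'\<in>cls A R X g. c = F g'" for c
    using that assms(2) unfolding cls_def by auto
qed

lemma compose_PiE: "f \<in> A \<rightarrow> B \<Longrightarrow> g \<in> B \<rightarrow> C \<Longrightarrow> compose A g f \<in> A \<rightarrow>\<^sub>E C"
  by (simp add: PiE_def funcset_compose)

lemma approx_compose_left:
  assumes "approx A R g g'"
  shows "approx A R (compose A h g) (compose A h g')"
proof (cases "g = g'")
  case True
  then show ?thesis by (simp add: approx_refl)
next
  case False
  then obtain x x' where "x \<noteq> x'" "g ` A = {x, x'}" "g' ` A = {x, x'}"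
    and preimage: "{a\<in>A. g a = x} \<in> R"
    and swap: "\<And>a. a \<in> A \<Longrightarrow> g a = x \<longleftrightarrow> g' a = x'"
    by (rule approxE[OF assms]) blast
  then have range: "g a \<in> {x, x'}" "g' a \<in> {x, x'}" if "a \<in> A" for a
    using that by (metis imageI)+
  show ?thesis
  proof (cases "h x = h x'")
    case True
    have "compose A h g a = compose A h g' a" for a
      using range[of a] True by (cases "a \<in> A") (auto simp: compose_def)
    then have "compose A h g = compose A h g'" ..
    then show ?thesis by (simp add: approx_refl)
  next
    case False
    have separates: "h (g a) = h x \<longleftrightarrow> g a = x" "h (g' a) = h x' \<longleftrightarrow> g' a = x'"
      if "a \<in> A" for a
      using range[OF that] False by auto
    have "compose A h g ` A = {h x, h x'}"
      using \<open>g ` A = {x, x'}\<close> by (rule surj_compose) simp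
    moreover have "{a\<in>A. compose A h g a = h x} \<in> R"
      using preimage separates(1) by (simp add: compose_eq cong: conj_cong)
    moreover have "compose A h g' a \<in> {h x, h x'}" if "a \<in> A" for a
      using range(2)[OF that] that by (auto simp: compose_eq)
    moreover have "compose A h g a = h x \<longleftrightarrow> compose A h g' a = h x'" if "a \<in> A" for a
      using that swap[OF that] separates[OF that] by (simp add: compose_eq)
    ultimately show ?thesis
      using False by (intro approxI)
  qed
qed

definition nontrivial_family :: "'a set \<Rightarrow> 'a set set \<Rightarrow> bool" where
  "nontrivial_family A R \<longleftrightarrow> (\<forall>Q\<in>R. Q \<noteq> {} \<and> Q \<noteq> A)"

lemma approx_compose_right:
  assumes "Tmor A R B S f" "nontrivial_family A R" "approx B S g g'"
  shows "approx A R (compose A g f) (compose A g' f)"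
proof (cases "g = g'")
  case True
  then show ?thesis by (simp add: approx_refl)
next
  case False
  have f: "f \<in> A \<rightarrow> B" and preimages: "\<And>P. P \<in> S \<Longrightarrow> {a\<in>A. f a \<in> P} \<in> R"
    using assms(1) unfolding Tmor_def by auto
  from False obtain x x' where "x \<noteq> x'" "g ` B = {x, x'}" "g' ` B = {x, x'}"
    and "{b\<in>B. g b = x} \<in> S"
    and swap: "\<And>b. b \<in> B \<Longrightarrow> g b = x \<longleftrightarrow> g' b = x'"
    by (rule approxE[OF assms(3)]) blast
  have range: "g (f a) \<in> {x, x'}" "g' (f a) \<in> {x, x'}" if "a \<in> A" for a
    using that f \<open>g ` B = {x, x'}\<close> \<open>g' ` B = {x, x'}\<close> by (metis PiE imageI)+
  have "{a\<in>A. f a \<in> {b\<in>B. g b = x}} \<in> R"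
    using preimages \<open>{b\<in>B. g b = x} \<in> S\<close> .
  moreover have "{a\<in>A. f a \<in> {b\<in>B. g b = x}} = {a\<in>A. g (f a) = x}"
    using f by auto
  ultimately have "{a\<in>A. g (f a) = x} \<in> R"
    by simp
  then have preimage: "{a\<in>A. compose A g f a = x} \<in> R"
    by (simp add: compose_eq cong: conj_cong)
  \<comment> \<open>Nontriviality of this preimage is what makes \<open>g f\<close> take both values.\<close>
  have "{a\<in>A. g (f a) = x} \<noteq> {} \<and> {a\<in>A. g (f a) = x} \<noteq> A"
    using assms(2) \<open>{a\<in>A. g (f a) = x} \<in> R\<close> unfolding nontrivial_family_def by (rule bspec)
  then obtain a1 a2 where "a1 \<in> A" "g (f a1) = x" "a2 \<in> A" "g (f a2) \<noteq> x"
    by blast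
  then have "compose A g f a1 = x" "compose A g f a2 = x'"
    using range(1)[OF \<open>a2 \<in> A\<close>] by (simp_all add: compose_eq)
  then have "compose A g f ` A = {x, x'}"
    using \<open>a1 \<in> A\<close> \<open>a2 \<in> A\<close> range(1) by (auto simp: compose_eq image_iff)
  moreover have "compose A g' f a \<in> {x, x'}" if "a \<in> A" for a
    using range(2)[OF that] that by (simp add: compose_eq)
  moreover have "compose A g f a = x \<longleftrightarrow> compose A g' f a = x'" if "a \<in> A" for a
    using that f swap by (auto simp: compose_eq)
  ultimately show ?thesis
    using \<open>x \<noteq> x'\<close> preimage by (intro approxI)
qed

lemma PhiMap_cls:
  assumes "h \<in> X \<rightarrow> Y" "g \<in> A \<rightarrow>\<^sub>E X"
  shows "PhiMap A R Y h (cls A R X g) = cls A R Y (compose A h g)"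
  unfolding PhiMap_def
proof (rule the_cls_lift[OF assms(2)])
  fix g' assume "g' \<in> A \<rightarrow>\<^sub>E X" "approx A R g g'"
  then show "cls A R Y (compose A h g') = cls A R Y (compose A h g)"
    using assms by (intro cls_eq[symmetric] approx_compose_left compose_PiE) auto
qed

lemma PhiMor_cls:
  assumes "Tmor A R B S f" "nontrivial_family A R" "g \<in> B \<rightarrow>\<^sub>E X"
  shows "PhiMor A R X f (cls B S X g) = cls A R X (compose A g f)"
  unfolding PhiMor_def
proof (rule the_cls_lift[OF assms(3)])
  have "f \<in> A \<rightarrow> B" using assms(1) by (simp add: Tmor_def)
  fix g' assume "g' \<in> B \<rightarrow>\<^sub>E X" "approx B S g g'"
  then show "cls A R X (compose A g' f) = cls A R X (compose A g f)"
    using assms \<open>f \<in> A \<rightarrow> B\<close>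
    by (intro cls_eq[symmetric] approx_compose_right compose_PiE) auto
qed

lemma PhiMor_in_PhiObj:
  assumes "Tmor A R B S f" "nontrivial_family A R" "c \<in> PhiObj B S X"
  shows "PhiMor A R X f c \<in> PhiObj A R X"
proof -
  obtain g where g: "g \<in> B \<rightarrow>\<^sub>E X" "c = cls B S X g"
    using assms(3) unfolding PhiObj_def by blast
  have "f \<in> A \<rightarrow> B" using assms(1) by (simp add: Tmor_def)
  moreover have "g \<in> B \<rightarrow> X"
    using g(1) by (simp add: PiE_def)
  ultimately have "compose A g f \<in> A \<rightarrow>\<^sub>E X"
    by (rule compose_PiE)
  then show ?thesis
    unfolding g(2) PhiMor_cls[OF assms(1,2) g(1)] PhiObj_def by (rule imageI)
qed

lemma PhiMor_natural:
  assumes "Tmor A R B S f" "nontrivial_family A R" "h \<in> X \<rightarrow> Y" "c \<in> PhiObj B S X"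
  shows "PhiMor A R Y f (PhiMap B S Y h c) = PhiMap A R Y h (PhiMor A R X f c)"
proof -
  obtain g where g: "g \<in> B \<rightarrow>\<^sub>E X" and c: "c = cls B S X g"
    using assms(4) unfolding PhiObj_def by blast
  have f: "f \<in> A \<rightarrow> B" using assms(1) by (simp add: Tmor_def)
  have "g \<in> B \<rightarrow> X"
    using g by (simp add: PiE_def)
  then have hg: "compose B h g \<in> B \<rightarrow>\<^sub>E Y" and gf: "compose A g f \<in> A \<rightarrow>\<^sub>E X"
    using assms(3) f by (simp_all add: compose_PiE)
  have "PhiMor A R Y f (PhiMap B S Y h c) = PhiMor A R Y f (cls B S Y (compose B h g))"
    by (simp add: c PhiMap_cls[OF assms(3) g])
  also have "\<dots> = cls A R Y (compose A (compose B h g) f)"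
    by (rule PhiMor_cls[OF assms(1,2) hg])
  also have "\<dots> = cls A R Y (compose A h (compose A g f))"
    by (simp add: compose_assoc[OF f])
  also have "\<dots> = PhiMap A R Y h (cls A R X (compose A g f))"
    by (rule PhiMap_cls[OF assms(3) gf, symmetric])
  also have "\<dots> = PhiMap A R Y h (PhiMor A R X f c)"
    by (simp add: c PhiMor_cls[OF assms(1,2) g])
  finally show ?thesis .
qed

lemma edge_separates_vertices:
  assumes "inj_on v {1..6}" "e \<subseteq> Vset v" "card e = 2"
  shows "(\<exists>i\<in>{1..6}. v i \<in> e) \<and> (\<exists>j\<in>{1..6}. v j \<notin> e)"
proof -
  have "card (Vset v) = 6"
    using assms(1) by (simp add: Vset_def card_image)
  then have "\<not> Vset v \<subseteq> e"
    using assms(3) card_mono[of e "Vset v"] card.infinite[of e] by fastforce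
  moreover have "e \<noteq> {}"
    using assms(3) by auto
  ultimately show ?thesis
    using assms(2) unfolding Vset_def by blast
qed

lemma Psi_fam_separates_vertices:
  assumes "inj_on v {1..6}" "\<forall>e\<in>G. e \<subseteq> Vset v \<and> card e = 2" "Y \<in> Psi_fam v G A0 R0"
  shows "(\<exists>i\<in>{1..6}. Inr (v i) \<in> Y) \<and> (\<exists>j\<in>{1..6}. Inr (v j) \<notin> Y)"
proof -
  have v_eq_iff: "v i = v j \<longleftrightarrow> i = j" if "i \<in> {1..6}" "j \<in> {1..6}" for i j
    using assms(1) that by (meson inj_on_eq_iff)
  have in_car: "Inr (v i) \<in> Psi_car v A0" if "i \<in> {1..6}" for i
    using that by (simp add: Psi_car_def Vset_def)
  have other_vertex: "\<exists>j\<in>{1..6::nat}. j \<noteq> i" for i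
    by (cases "i = 1") auto
  have edge: "(\<exists>i\<in>{1..6}. v i \<in> e) \<and> (\<exists>j\<in>{1..6}. v j \<notin> e)" if "e \<in> G" for e
    using assms(2) that by (intro edge_separates_vertices[OF assms(1)]) auto
  have numerals_in_range: "1 \<in> {1..6::nat}" "4 \<in> {1..6::nat}"
    by simp_all
  from assms(3) consider
      i where "i \<in> {1..6}" "Y = {Inr (v i)}"
    | i where "i \<in> {1..6}" "Y = Psi_car v A0 - {Inr (v i)}"
    | e where "e \<in> G" "Y = Inr ` e"
    | e where "e \<in> G" "Y = Psi_car v A0 - Inr ` e"
    | R where "Y = Inr ` {v 1, v 2, v 3} \<union> Inl ` R"
    | R where "Y = Inr ` {v 4, v 5, v 6} \<union> Inl ` (A0 - R)"
    unfolding Psi_fam_def by (elim UnE CollectE exE conjE) metis+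
  then show ?thesis
  proof cases
    case (1 i)
    then show ?thesis
      using other_vertex[of i] v_eq_iff by auto
  next
    case (2 i)
    then show ?thesis
      using other_vertex[of i] v_eq_iff in_car by auto
  next
    case (3 e)
    then show ?thesis
      using edge[OF \<open>e \<in> G\<close>] by auto
  next
    case (4 e)
    then show ?thesis
      using edge[OF \<open>e \<in> G\<close>] in_car by auto
  next
    case 5
    then have "Inr (v 1) \<in> Y" "Inr (v 4) \<notin> Y"
      using v_eq_iff[of 4] by auto
    then show ?thesis
      using numerals_in_range by blast
  next
    case 6
    then have "Inr (v 4) \<in> Y" "Inr (v 1) \<notin> Y"
      using v_eq_iff[of 1] by auto
    then show ?thesis
      using numerals_in_range by blast
  qed
qed

lemma Kobj_nontrivial:
  assumes "rigid_graph v G" "Kobj v G A R"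
  shows "nontrivial_family A R"
  unfolding nontrivial_family_def
proof
  fix Q assume "Q \<in> R"
  obtain A0 R0 where A: "A = Psi_car v A0" and R: "R = Psi_fam v G A0 R0"
    using assms(2) unfolding Kobj_def by blast
  have "inj_on v {1..6}" "\<forall>e\<in>G. e \<subseteq> Vset v \<and> card e = 2"
    using assms(1) unfolding rigid_graph_def by auto
  moreover have "Q \<in> Psi_fam v G A0 R0"
    using \<open>Q \<in> R\<close> R by simp
  ultimately have separates: "(\<exists>i\<in>{1..6}. Inr (v i) \<in> Q) \<and> (\<exists>j\<in>{1..6}. Inr (v j) \<notin> Q)"
    by (rule Psi_fam_separates_vertices)
  then obtain j where "j \<in> {1..6}" "Inr (v j) \<notin> Q"
    by blast
  moreover have "Inr (v j) \<in> A"
    using \<open>j \<in> {1..6}\<close> by (simp add: A Psi_car_def Vset_def)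
  ultimately show "Q \<noteq> {} \<and> Q \<noteq> A"
    using separates by blast
qed

theorem lemma3p4:
  fixes v :: "nat \<Rightarrow> 'v" and G :: "'v set set"
    and A :: "('a + 'v) set" and R :: "('a + 'v) set set"
    and B :: "('b + 'v) set" and S :: "('b + 'v) set set"
    and f :: "'a + 'v \<Rightarrow> 'b + 'v"
  assumes "rigid_graph v G"
    and "Kobj v G A R" and "Kobj v G B S"
    and "Tmor A R B S f"
  shows "(\<forall>(X::'x set). \<forall>g\<in>B \<rightarrow>\<^sub>E X.
            PhiMor A R X f (cls B S X g) = cls A R X (compose A g f))
       \<and> (\<forall>(X::'x set). \<forall>c\<in>PhiObj B S X. PhiMor A R X f c \<in> PhiObj A R X)
       \<and> (\<forall>(X::'x set) (Y::'y set) h. h \<in> X \<rightarrow> Y \<longrightarrow>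
            (\<forall>c\<in>PhiObj B S X.
               PhiMor A R Y f (PhiMap B S Y h c) = PhiMap A R Y h (PhiMor A R X f c)))"
proof -
  have nontrivial: "nontrivial_family A R"
    using assms(1,2) by (rule Kobj_nontrivial)
  show ?thesis
  proof (intro conjI allI ballI impI)
    show "PhiMor A R X f (cls B S X g) = cls A R X (compose A g f)"
      if "g \<in> B \<rightarrow>\<^sub>E X" for X :: "'x set" and g
      using assms(4) nontrivial that by (rule PhiMor_cls)
    show "PhiMor A R X f c \<in> PhiObj A R X" if "c \<in> PhiObj B S X" for X :: "'x set" and c
      using assms(4) nontrivial that by (rule PhiMor_in_PhiObj)
    show "PhiMor A R Y f (PhiMap B S Y h c) = PhiMap A R Y h (PhiMor A R X f c)"
      if "h \<in> X \<rightarrow> Y" "c \<in> PhiObj B S X" for X :: "'x set" and Y :: "'y set" and h c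
      using assms(4) nontrivial that by (rule PhiMor_natural)
  qed
qed

end
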